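(* Let $F$ be a pseudo-Boolean formula and let $(\mathcal{C},\mathcal{D},\mathcal{O},\mathcal{S},\vec z,\vec a)$ be a configuration satisfying the standing invariants below that is weakly $F$-valid. Suppose that a PB constraint $C$ and a substitution $\omega$ satisfy: $C$ contains no variable of $\vec a$; no variable is mapped by $\omega$ to a literal over a variable of $\vec a$; and there is a cutting planes derivation $\mathcal{C}\cup\mathcal{D}\cup\{\neg C\}\cup\mathcal{S}(\vec z{\upharpoonright}_\omega,\vec z,\vec a)\vdash(\mathcal{C}\cup\mathcal{D}\cup\{C\}){\upharpoonright}_\omega\cup\mathcal{O}(\vec z{\upharpoonright}_\omega,\vec z,\vec a)$ (i.e., the transition to $(\mathcal{C},\mathcal{D}\cup\{C\},\mathcal{O},\mathcal{S},\vec z,\vec a)$ is a valid application of the redundance rule). Then $(\mathcal{C},\mathcal{D}\cup\{C\},\mathcal{O},\mathcal{S},\vec z,\vec a)$ is also weakly $F$-valid.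
   Context: A literal is $x$ or $\bar x=1-x$; a PB constraint is $\sum_i a_i\ell_i\ge A$ with negation $\neg C\doteq\sum_i a_i\bar\ell_i\ge\sum_i a_i-A+1$; formulas are sets of PB constraints; $\vdash$ is cutting planes derivability (sound). Substitutions $\omega$ map variables to $0,1$ or literals, with $\omega(\bar x)=\overline{\omega(x)}$, $\mathrm{supp}(\omega)=\{x:\omega(x)\ne x\}$, $F{\upharpoonright}_\omega$ the result of applying $\omega$ to each literal of each constraint, $\vec z{\upharpoonright}_\omega=\omega(z_1),\dots,\omega(z_n)$, $(\alpha\circ\omega)(x)=\alpha(\omega(x))$. A formula $\mathcal{S}(\vec x,\vec a)=\{C_1,\dots,C_m\}$ is a specification over $\vec a$ if there are substitutions $\omega_i$ with $\mathrm{supp}(\omega_i)\subseteq\vec a$ such that $\{C_1,\dots,C_{i-1},\neg C_i\}\vdash\{C_1{\upharpoonright}_{\omega_i},\dots,C_i{\upharpoonright}_{\omega_i}\}$ for each $i$. Given formulas $\mathcal{O}(\vec u,\vec v,\vec a)$, $\mathcal{S}(\vec u,\vec v,\vec a)$ ($\vec u,\vec v$ of length $n$) and a list $\vec z$ of $n$ variables, $\alpha\preceq\beta$ holds iff there is an assignment $\rho$ to $\vec a$ with $\mathcal{S}(\vec z{\upharpoonright}_\alpha,\vec z{\upharpoonright}_\beta,\vec a{\upharpoonright}_\rho)\wedge\mathcal{O}(\vec z{\upharpoonright}_\alpha,\vec z{\upharpoonright}_\beta,\vec a{\upharpoonright}_\rho)$ true. A configuration is a tuple $(\mathcal{C},\mathcal{D},\mathcal{O},\mathcal{S},\vec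 z,\vec a)$ of formulas $\mathcal{C}$ (core), $\mathcal{D}$ (derived), $\mathcal{O},\mathcal{S}$ and disjoint variable lists $\vec z,\vec a$, satisfying the standing invariants: (1) there are cutting planes derivations $\mathcal{S}(\vec x,\vec x,\vec a)\vdash\mathcal{O}(\vec x,\vec x,\vec a)$ and $\mathcal{S}(\vec x,\vec y,\vec a)\cup\mathcal{O}(\vec x,\vec y,\vec a)\cup\mathcal{S}(\vec y,\vec z',\vec b)\cup\mathcal{O}(\vec y,\vec z',\vec b)\cup\mathcal{S}(\vec x,\vec z',\vec c)\vdash\mathcal{O}(\vec x,\vec z',\vec c)$ for fresh variable lists; (2) $\mathcal{S}$ is a specification over $\vec a$; (3) the variables of $\vec a$ occur only in $\mathcal{O}$ and $\mathcal{S}$ and are disjoint from $\vec z$. Assignments satisfying $\mathcal{C}\cup\mathcal{D}$ are total assignments to the non-auxiliary variables (they do not assign $\vec a$). The configuration is weakly $F$-valid if (1) if $F$ is satisfiable then $\mathcal{C}$ is satisfiable, and (2) for every assignment $\alpha$ satisfying $\mathcal{C}$ there is an assignment $\alpha'$ satisfying $\mathcal{C}\cup\mathcal{D}$ with $\alpha'\preceq\alpha$. *)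

theory Defs
  imports Main
begin

datatype 'v lit = Pos 'v | Neg 'v

fun lit_var :: "'v lit \<Rightarrow> 'v" where
  "lit_var (Pos x) = x" | "lit_var (Neg x) = x"

fun neg_lit :: "'v lit \<Rightarrow> 'v lit" where
  "neg_lit (Pos x) = Neg x" | "neg_lit (Neg x) = Pos x"

text \<open>A PB constraint  sum_i a_i l_i >= A  is a list of terms (a_i, l_i) together with A.\<close>
type_synonym 'v pbc = "(int \<times> 'v lit) list \<times> int"
type_synonym 'v pbf = "'v pbc set"

fun lit_val :: "('v \<Rightarrow> bool) \<Rightarrow> 'v lit \<Rightarrow> int" where
  "lit_val \<alpha> (Pos x) = (if \<alpha> x then 1 else 0)"
| "lit_val \<alpha> (Neg x) = (if \<alpha> x then 0 else 1)"

definition lhs :: "('v \<Rightarrow> bool) \<Rightarrow> (int \<times> 'v lit) list \<Rightarrow> int" where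
  "lhs \<alpha> t = (\<Sum>(a, l)\<leftarrow>t. a * lit_val \<alpha> l)"

definition sat_pbc :: "('v \<Rightarrow> bool) \<Rightarrow> 'v pbc \<Rightarrow> bool" where
  "sat_pbc \<alpha> C \<longleftrightarrow> lhs \<alpha> (fst C) \<ge> snd C"

definition sat_pbf :: "('v \<Rightarrow> bool) \<Rightarrow> 'v pbf \<Rightarrow> bool" where
  "sat_pbf \<alpha> F \<longleftrightarrow> (\<forall>C\<in>F. sat_pbc \<alpha> C)"

definition satisfiable :: "'v pbf \<Rightarrow> bool" where
  "satisfiable F \<longleftrightarrow> (\<exists>\<alpha>. sat_pbf \<alpha> F)"

definition neg_pbc :: "'v pbc \<Rightarrow> 'v pbc" where
  "neg_pbc C = (map (\<lambda>(a, l). (a, neg_lit l)) (fst C), sum_list (map fst (fst C)) - snd C + 1)"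

definition vars_pbc :: "'v pbc \<Rightarrow> 'v set" where
  "vars_pbc C = {lit_var l | a l. (a, l) \<in> set (fst C)}"

definition vars_pbf :: "'v pbf \<Rightarrow> 'v set" where
  "vars_pbf F = (\<Union>C\<in>F. vars_pbc C)"

text \<open>Ceiling division for positive divisor.\<close>
definition cdiv :: "int \<Rightarrow> int \<Rightarrow> int" where
  "cdiv a c = - ((- a) div c)"

inductive cp :: "'v pbf \<Rightarrow> 'v pbc \<Rightarrow> bool" for F :: "'v pbf" where
  cp_axiom: "C \<in> F \<Longrightarrow> cp F C"
| cp_lit: "cp F ([(1, l)], 0)"
| cp_add: "cp F (t1, A1) \<Longrightarrow> cp F (t2, A2) \<Longrightarrow> cp F (t1 @ t2, A1 + A2)"
| cp_mult: "cp F (t, A) \<Longrightarrow> c > 0 \<Longrightarrow> cp F (map (\<lambda>(a, l). (c * a, l)) t, c * A)"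
| cp_div: "cp F (t, A) \<Longrightarrow> c > 0 \<Longrightarrow> (\<forall>(a, l)\<in>set t. a \<ge> 0) \<Longrightarrow>
     cp F (map (\<lambda>(a, l). (cdiv a c, l)) t, cdiv A c)"
| cp_sat: "cp F (t, A) \<Longrightarrow> A \<ge> 0 \<Longrightarrow> (\<forall>(a, l)\<in>set t. a \<ge> 0) \<Longrightarrow>
     cp F (map (\<lambda>(a, l). (min a A, l)) t, A)"
| cp_rewrite: "cp F (t, A) \<Longrightarrow> (\<forall>\<alpha>. lhs \<alpha> t - A = lhs \<alpha> t' - A') \<Longrightarrow> cp F (t', A')"

definition derives :: "'v pbf \<Rightarrow> 'v pbf \<Rightarrow> bool" (infix "\<turnstile>\<^sub>c\<^sub>p" 50) where
  "F \<turnstile>\<^sub>c\<^sub>p G \<longleftrightarrow> (\<forall>C\<in>G. cp F C)"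

datatype 'v sval = Val bool | LitV "'v lit"

fun neg_sval :: "'v sval \<Rightarrow> 'v sval" where
  "neg_sval (Val b) = Val (\<not> b)" | "neg_sval (LitV l) = LitV (neg_lit l)"

fun sub_lit :: "('w \<Rightarrow> 'v sval) \<Rightarrow> 'w lit \<Rightarrow> 'v sval" where
  "sub_lit \<omega> (Pos x) = \<omega> x" | "sub_lit \<omega> (Neg x) = neg_sval (\<omega> x)"

text \<open>Applying a substitution to a constraint: terms mapped to literals stay, terms mapped to 1
  are moved to the degree, terms mapped to 0 vanish.\<close>
definition subst_pbc :: "('w \<Rightarrow> 'v sval) \<Rightarrow> 'w pbc \<Rightarrow> 'v pbc" where
  "subst_pbc \<omega> C =
    (concat (map (\<lambda>(a, l). case sub_lit \<omega> l of LitV l' \<Rightarrow> [(a, l')] | Val _ \<Rightarrow> []) (fst C)),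
     snd C - sum_list (map (\<lambda>(a, l). if sub_lit \<omega> l = Val True then a else 0) (fst C)))"

definition subst_pbf :: "('w \<Rightarrow> 'v sval) \<Rightarrow> 'w pbf \<Rightarrow> 'v pbf" where
  "subst_pbf \<omega> F = subst_pbc \<omega> ` F"

definition supp :: "('v \<Rightarrow> 'v sval) \<Rightarrow> 'v set" where
  "supp \<omega> = {x. \<omega> x \<noteq> LitV (Pos x)}"

definition list_subst :: "'v list \<Rightarrow> ('v \<Rightarrow> 'w sval) \<Rightarrow> 'w sval list" where
  "list_subst zs \<omega> = map \<omega> zs"

definition list_assign :: "'v list \<Rightarrow> ('v \<Rightarrow> bool) \<Rightarrow> 'w sval list" where
  "list_assign zs \<alpha> = map (\<lambda>x. Val (\<alpha> x)) zs"

definition list_vars :: "'v list \<Rightarrow> 'v sval list" where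
  "list_vars zs = map (\<lambda>x. LitV (Pos x)) zs"

text \<open>Formal parameters: u_i = FU i, v_i = FV i, a_j = FA j.\<close>
datatype fvar = FU nat | FV nat | FA nat

fun inst :: "'v sval list \<Rightarrow> 'v sval list \<Rightarrow> 'v sval list \<Rightarrow> fvar \<Rightarrow> 'v sval" where
  "inst xs ys cs (FU i) = xs ! i"
| "inst xs ys cs (FV i) = ys ! i"
| "inst xs ys cs (FA j) = cs ! j"

definition app :: "fvar pbf \<Rightarrow> 'v sval list \<Rightarrow> 'v sval list \<Rightarrow> 'v sval list \<Rightarrow> 'v pbf" where
  "app P xs ys cs = subst_pbf (inst xs ys cs) P"

definition params_ok :: "nat \<Rightarrow> nat \<Rightarrow> fvar pbf \<Rightarrow> bool" where
  "params_ok n m P \<longleftrightarrow> vars_pbf P \<subseteq> {FU i | i. i < n} \<union> {FV i | i. i < n} \<union> {FA j | j. j < m}"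

text \<open>Fresh variables used to state invariant (1).\<close>
datatype ivar = IX nat | IY nat | IZ nat | IA nat | IB nat | IC nat

definition fresh :: "(nat \<Rightarrow> ivar) \<Rightarrow> nat \<Rightarrow> ivar sval list" where
  "fresh f k = map (\<lambda>i. LitV (Pos (f i))) [0..<k]"

definition is_specification :: "nat \<Rightarrow> fvar pbf \<Rightarrow> bool" where
  "is_specification m S \<longleftrightarrow> finite S \<and> (\<exists>cs. distinct cs \<and> set cs = S \<and>
     (\<forall>i < length cs. \<exists>\<omega>. supp \<omega> \<subseteq> {FA j | j. j < m} \<and>
        (set (take i cs) \<union> {neg_pbc (cs ! i)}) \<turnstile>\<^sub>c\<^sub>p subst_pbf \<omega> (set (take (Suc i) cs))))"

definition configuration ::
  "'v pbf \<Rightarrow> 'v pbf \<Rightarrow> fvar pbf \<Rightarrow> fvar pbf \<Rightarrow> 'v list \<Rightarrow> 'v list \<Rightarrow> bool" where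
  "configuration C D Ob Sp z a \<longleftrightarrow>
    (let n = length z; m = length a;
         x = fresh IX n; y = fresh IY n; z' = fresh IZ n;
         a0 = fresh IA m; b = fresh IB m; c = fresh IC m in
     distinct z \<and> distinct a \<and> set z \<inter> set a = {} \<and>
     params_ok n m Ob \<and> params_ok n m Sp \<and>
     \<comment> \<open>invariant (1)\<close>
     app Sp x x a0 \<turnstile>\<^sub>c\<^sub>p app Ob x x a0 \<and>
     app Sp x y a0 \<union> app Ob x y a0 \<union> app Sp y z' b \<union> app Ob y z' b \<union> app Sp x z' c
        \<turnstile>\<^sub>c\<^sub>p app Ob x z' c \<and>
     \<comment> \<open>invariant (2)\<close>
     is_specification m Sp \<and>
     \<comment> \<open>invariant (3)\<close>
     vars_pbf C \<inter> set a = {} \<and> vars_pbf D \<inter> set a = {})"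

text \<open>alpha \<preceq> beta: some assignment rho to a makes S(z|alpha, z|beta, a|rho) and
  Ob(z|alpha, z|beta, a|rho) true (these are variable-free).\<close>
definition pre ::
  "fvar pbf \<Rightarrow> fvar pbf \<Rightarrow> 'v list \<Rightarrow> 'v list \<Rightarrow> ('v \<Rightarrow> bool) \<Rightarrow> ('v \<Rightarrow> bool) \<Rightarrow> bool" where
  "pre Ob Sp z a \<alpha> \<beta> \<longleftrightarrow> (\<exists>\<rho>::'v \<Rightarrow> bool. \<forall>\<gamma>::'v \<Rightarrow> bool.
     sat_pbf \<gamma> (app Sp (list_assign z \<alpha>) (list_assign z \<beta>) (list_assign a \<rho>) \<union>
                app Ob (list_assign z \<alpha>) (list_assign z \<beta>) (list_assign a \<rho>)))"

definition weakly_valid ::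
  "'v pbf \<Rightarrow> 'v pbf \<Rightarrow> 'v pbf \<Rightarrow> fvar pbf \<Rightarrow> fvar pbf \<Rightarrow> 'v list \<Rightarrow> 'v list \<Rightarrow> bool" where
  "weakly_valid F C D Ob Sp z a \<longleftrightarrow>
     (satisfiable F \<longrightarrow> satisfiable C) \<and>
     (\<forall>\<alpha>. sat_pbf \<alpha> C \<longrightarrow> (\<exists>\<alpha>'. sat_pbf \<alpha>' (C \<union> D) \<and> pre Ob Sp z a \<alpha>' \<alpha>))"

end

theory Submission
  imports Defs
begin

text \<open>Let \<alpha> satisfy C. Weak validity yields \<alpha>' \<preceq> \<alpha> satisfying C \<union> D; if \<alpha>' also satisfies
  the new constraint Cn we are done. Otherwise extend \<alpha>' to the auxiliary variables so that it
  satisfies S(z|\<omega>, z, a), which is possible because S is a specification; by soundness of cutting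
  planes the redundance derivation then shows that \<alpha>' \<circ> \<omega> satisfies C \<union> D \<union> {Cn} and that
  \<alpha>' \<circ> \<omega> \<preceq> \<alpha>'. Finally \<preceq> is transitive, by invariant (1) together with the specification
  property, which supplies the auxiliary values for the composed pair.\<close>

fun sval_holds :: "('v \<Rightarrow> bool) \<Rightarrow> 'v sval \<Rightarrow> bool" where
  "sval_holds g (Val b) = b"
| "sval_holds g (LitV (Pos x)) = g x"
| "sval_holds g (LitV (Neg x)) = (\<not> g x)"

lemma sval_holds_neg_sval [simp]: "sval_holds g (neg_sval s) \<longleftrightarrow> \<not> sval_holds g s"
  by (cases "(g, s)" rule: sval_holds.cases) auto

lemma lit_val_eq_of_bool: "lit_val g l = of_bool (sval_holds g (LitV l))"
  by (cases l) auto

lemma lit_val_neg_lit: "lit_val g (neg_lit l) = 1 - lit_val g l"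
  by (cases l) auto

lemma sval_holds_comp_sub_lit [simp]:
  "sval_holds (\<lambda>x. sval_holds g (\<sigma> x)) (LitV l) \<longleftrightarrow> sval_holds g (sub_lit \<sigma> l)"
  by (cases l) auto

subsection \<open>Soundness of cutting planes\<close>

lemma lhs_Nil [simp]: "lhs g [] = 0"
  by (simp add: lhs_def)

lemma lhs_Cons [simp]: "lhs g ((a, l) # t) = a * lit_val g l + lhs g t"
  by (simp add: lhs_def)

lemma lhs_append [simp]: "lhs g (t1 @ t2) = lhs g t1 + lhs g t2"
  by (simp add: lhs_def)

lemma lhs_mult: "lhs g (map (\<lambda>(a, l). (c * a, l)) t) = c * lhs g t"
  by (induction t) (auto simp: algebra_simps)

lemma lhs_neg_lits: "lhs g (map (\<lambda>(a, l). (a, neg_lit l)) t) = sum_list (map fst t) - lhs g t"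
  by (induction t) (auto simp: lit_val_neg_lit algebra_simps)

lemma lhs_nonneg: "\<forall>(a, l)\<in>set t. a \<ge> 0 \<Longrightarrow> lhs g t \<ge> 0"
  by (induction t) (auto simp: lit_val_eq_of_bool)

lemma cdiv_add_le: "(c::int) > 0 \<Longrightarrow> cdiv (x + y) c \<le> cdiv x c + cdiv y c"
proof -
  assume c: "c > 0"
  have "(- x + - y) div c = (- x) div c + (- y) div c + ((- x) mod c + (- y) mod c) div c"
    by (rule div_add1_eq)
  moreover have "((- x) mod c + (- y) mod c) div c \<ge> 0"
    using c by (simp add: pos_imp_zdiv_nonneg_iff)
  ultimately show ?thesis
    unfolding cdiv_def by simp
qed

lemma cdiv_mono: "(c::int) > 0 \<Longrightarrow> x \<le> y \<Longrightarrow> cdiv x c \<le> cdiv y c"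
  unfolding cdiv_def by (simp add: zdiv_mono1)

lemma cdiv_lhs_le: "c > 0 \<Longrightarrow> cdiv (lhs g t) c \<le> lhs g (map (\<lambda>(a, l). (cdiv a c, l)) t)"
proof (induction t)
  case Nil
  then show ?case by (simp add: cdiv_def)
next
  case (Cons p t)
  obtain a l where p: "p = (a, l)" by force
  have "cdiv (a * lit_val g l + lhs g t) c \<le> cdiv (a * lit_val g l) c + cdiv (lhs g t) c"
    using Cons.prems by (rule cdiv_add_le)
  moreover have "cdiv (a * lit_val g l) c = cdiv a c * lit_val g l"
    by (simp add: lit_val_eq_of_bool cdiv_def)
  ultimately show ?case
    using Cons p by simp
qed

lemma min_lhs_le_lhs_saturate:
  assumes "\<forall>(a, l)\<in>set t. a \<ge> 0" and "A \<ge> 0"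
  shows "min (lhs g t) A \<le> lhs g (map (\<lambda>(a, l). (min a A, l)) t)"
  using assms(1)
proof (induction t)
  case Nil
  then show ?case using assms(2) by simp
next
  case (Cons p t)
  obtain a l where p: "p = (a, l)" by force
  let ?L = "lhs g t" and ?L' = "lhs g (map (\<lambda>(a, l). (min a A, l)) t)"
  have "min ?L A \<le> ?L'" and "a \<ge> 0"
    using Cons p by auto
  moreover have "?L' \<ge> 0"
    by (rule lhs_nonneg) (use Cons.prems assms(2) in auto)
  ultimately have "min (a * v + ?L) A \<le> min a A * v + ?L'" if "v = 0 \<or> v = 1" for v
    using that by (auto simp: min_def split: if_split_asm)
  then show ?case
    using p by (simp add: lit_val_eq_of_bool)
qed

lemma cp_sound: "cp F C \<Longrightarrow> sat_pbf g F \<Longrightarrow> sat_pbc g C"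
proof (induction rule: cp.induct)
  case (cp_axiom C)
  then show ?case by (simp add: sat_pbf_def)
next
  case (cp_lit l)
  then show ?case by (simp add: sat_pbc_def lit_val_eq_of_bool)
next
  case (cp_add t1 A1 t2 A2)
  then show ?case by (simp add: sat_pbc_def)
next
  case (cp_mult t A c)
  then show ?case by (simp add: sat_pbc_def lhs_mult)
next
  case (cp_div t A c)
  then have "cdiv A c \<le> cdiv (lhs g t) c"
    by (simp add: sat_pbc_def cdiv_mono)
  then show ?case
    using cdiv_lhs_le[of c g t] cp_div by (simp add: sat_pbc_def)
next
  case (cp_sat t A)
  then show ?case
    using min_lhs_le_lhs_saturate[of t A g] by (simp add: sat_pbc_def)
next
  case (cp_rewrite t A t' A')
  then show ?case
    by (simp add: sat_pbc_def) (metis diff_ge_0_iff_ge)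
qed

lemma derives_sound: "F \<turnstile>\<^sub>c\<^sub>p G \<Longrightarrow> sat_pbf g F \<Longrightarrow> sat_pbf g G"
  using cp_sound unfolding derives_def sat_pbf_def by blast

lemma sat_neg_pbc: "sat_pbc g (neg_pbc C) \<longleftrightarrow> \<not> sat_pbc g C"
  by (auto simp: sat_pbc_def neg_pbc_def lhs_neg_lits)

subsection \<open>Satisfaction under substitutions and assignments\<close>

lemma sat_pbf_Un [simp]: "sat_pbf g (A \<union> B) \<longleftrightarrow> sat_pbf g A \<and> sat_pbf g B"
  by (auto simp: sat_pbf_def)

lemma sat_pbf_insert [simp]: "sat_pbf g (insert C A) \<longleftrightarrow> sat_pbc g C \<and> sat_pbf g A"
  by (auto simp: sat_pbf_def)

lemma lhs_subst:
  "lhs g (concat (map (\<lambda>(a, l). case sub_lit \<sigma> l of LitV l' \<Rightarrow> [(a, l')] | Val _ \<Rightarrow> []) t))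
   + sum_list (map (\<lambda>(a, l). if sub_lit \<sigma> l = Val True then a else 0) t)
   = lhs (sval_holds g \<circ> \<sigma>) t"
proof (induction t)
  case Nil
  then show ?case by simp
next
  case (Cons p t)
  obtain a l where p: "p = (a, l)" by force
  show ?case
    using Cons p by (cases "sub_lit \<sigma> l") (auto simp: lit_val_eq_of_bool)
qed

lemma sat_subst_pbc: "sat_pbc g (subst_pbc \<sigma> C) \<longleftrightarrow> sat_pbc (sval_holds g \<circ> \<sigma>) C"
  using lhs_subst[of g \<sigma> "fst C"] unfolding sat_pbc_def subst_pbc_def by auto

lemma sat_subst_pbf: "sat_pbf g (subst_pbf \<sigma> F) \<longleftrightarrow> sat_pbf (sval_holds g \<circ> \<sigma>) F"
  by (simp add: sat_pbf_def subst_pbf_def sat_subst_pbc)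

lemma lhs_cong: "\<forall>(a, l)\<in>set t. f (lit_var l) = g (lit_var l) \<Longrightarrow> lhs f t = lhs g t"
proof (induction t)
  case Nil
  then show ?case by simp
next
  case (Cons p t)
  obtain a l where p: "p = (a, l)" by force
  with Cons have "lit_val f l = lit_val g l"
    by (cases l) auto
  with Cons p show ?case by simp
qed

lemma sat_pbc_cong: "\<forall>x\<in>vars_pbc C. f x = g x \<Longrightarrow> sat_pbc f C \<longleftrightarrow> sat_pbc g C"
  unfolding sat_pbc_def vars_pbc_def by (subst lhs_cong[of _ f g]) auto

lemma sat_pbf_cong:
  assumes "\<forall>x\<in>vars_pbf F. f x = g x"
  shows "sat_pbf f F \<longleftrightarrow> sat_pbf g F"
proof -
  have "sat_pbc f C \<longleftrightarrow> sat_pbc g C" if "C \<in> F" for C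
    using assms that by (intro sat_pbc_cong) (auto simp: vars_pbf_def)
  then show ?thesis
    unfolding sat_pbf_def by blast
qed

fun param_asg :: "(nat \<Rightarrow> bool) \<Rightarrow> (nat \<Rightarrow> bool) \<Rightarrow> (nat \<Rightarrow> bool) \<Rightarrow> fvar \<Rightarrow> bool" where
  "param_asg u v r (FU i) = u i"
| "param_asg u v r (FV i) = v i"
| "param_asg u v r (FA j) = r j"

lemma sat_param_asg_cong:
  assumes "params_ok n m P"
    and "\<forall>i<n. u i = u' i" and "\<forall>i<n. v i = v' i" and "\<forall>j<m. r j = r' j"
  shows "sat_pbf (param_asg u v r) P \<longleftrightarrow> sat_pbf (param_asg u' v' r') P"
  by (rule sat_pbf_cong) (use assms in \<open>auto simp: params_ok_def\<close>)

lemma sat_app: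
  "sat_pbf g (app P xs ys cs) \<longleftrightarrow>
   sat_pbf (param_asg (sval_holds g \<circ> nth xs) (sval_holds g \<circ> nth ys) (sval_holds g \<circ> nth cs)) P"
proof -
  let ?\<nu> = "param_asg (sval_holds g \<circ> nth xs) (sval_holds g \<circ> nth ys) (sval_holds g \<circ> nth cs)"
  have "sval_holds g \<circ> inst xs ys cs = ?\<nu>"
  proof
    fix p show "(sval_holds g \<circ> inst xs ys cs) p = ?\<nu> p"
      by (cases p) auto
  qed
  then show ?thesis
    by (simp add: app_def sat_subst_pbf)
qed

lemma sat_app_list_assign:
  assumes "params_ok (length z) (length a) P"
  shows "sat_pbf g (app P (list_assign z \<alpha>) (list_assign z \<beta>) (list_assign a \<rho>)) \<longleftrightarrow>
         sat_pbf (param_asg (\<alpha> \<circ> nth z) (\<beta> \<circ> nth z) (\<rho> \<circ> nth a)) P"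
  unfolding sat_app by (rule sat_param_asg_cong[OF assms]) (auto simp: list_assign_def)

lemma sat_app_fresh:
  assumes "params_ok n m P"
  shows "sat_pbf g (app P (fresh f n) (fresh f' n) (fresh h m)) \<longleftrightarrow>
         sat_pbf (param_asg (g \<circ> f) (g \<circ> f') (g \<circ> h)) P"
  unfolding sat_app by (rule sat_param_asg_cong[OF assms]) (auto simp: fresh_def)

lemma sat_app_list_subst:
  assumes "params_ok (length z) (length a) P"
  shows "sat_pbf g (app P (list_subst z \<omega>) (list_vars z) (list_vars a)) \<longleftrightarrow>
         sat_pbf (param_asg (sval_holds g \<circ> \<omega> \<circ> nth z) (g \<circ> nth z) (g \<circ> nth a)) P"
  unfolding sat_app
  by (rule sat_param_asg_cong[OF assms]) (auto simp: list_subst_def list_vars_def)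

subsection \<open>Specifications and the preorder\<close>

lemma specification_satisfiable:
  assumes "is_specification m Sp"
  shows "\<exists>r. sat_pbf (param_asg u v r) Sp"
proof -
  obtain cs where cs: "set cs = Sp" and
    steps: "\<forall>i < length cs. \<exists>\<omega>. supp \<omega> \<subseteq> {FA j | j. j < m} \<and>
        set (take i cs) \<union> {neg_pbc (cs ! i)} \<turnstile>\<^sub>c\<^sub>p subst_pbf \<omega> (set (take (Suc i) cs))"
    using assms unfolding is_specification_def by blast
  have "\<exists>r. sat_pbf (param_asg u v r) (set (take i cs))" if "i \<le> length cs" for i
    using that
  proof (induction i)
    case 0
    then show ?case by (simp add: sat_pbf_def)
  next
    case (Suc i)
    then obtain r where r: "sat_pbf (param_asg u v r) (set (take i cs))"
      by auto
    have i: "i < length cs"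
      using Suc.prems by simp
    then have take_Suc: "set (take (Suc i) cs) = insert (cs ! i) (set (take i cs))"
      by (simp add: take_Suc_conv_app_nth)
    show ?case
    proof (cases "sat_pbc (param_asg u v r) (cs ! i)")
      case True
      with r take_Suc show ?thesis by auto
    next
      case False
      obtain \<omega> where \<omega>: "supp \<omega> \<subseteq> {FA j | j. j < m}" and
        derivation: "set (take i cs) \<union> {neg_pbc (cs ! i)} \<turnstile>\<^sub>c\<^sub>p subst_pbf \<omega> (set (take (Suc i) cs))"
        using steps i by blast
      have fixed: "\<omega> (FU k) = LitV (Pos (FU k))" "\<omega> (FV k) = LitV (Pos (FV k))" for k
        using \<omega> by (auto simp: supp_def)
      let ?r' = "\<lambda>j. sval_holds (param_asg u v r) (\<omega> (FA j))"
      have "sval_holds (param_asg u v r) \<circ> \<omega> = param_asg u v ?r'"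
      proof
        fix p
        show "(sval_holds (param_asg u v r) \<circ> \<omega>) p = param_asg u v ?r' p"
          by (cases p) (simp_all add: fixed)
      qed
      moreover have "sat_pbf (param_asg u v r) (subst_pbf \<omega> (set (take (Suc i) cs)))"
        using derivation by (rule derives_sound) (use r False in \<open>simp add: sat_neg_pbc\<close>)
      ultimately show ?thesis
        by (metis sat_subst_pbf)
    qed
  qed
  from this[of "length cs"] cs show ?thesis
    by simp
qed

lemma distinct_nth_interpolate:
  assumes "distinct xs"
  shows "\<exists>g. \<forall>j<length xs. g (xs ! j) = f j"
proof -
  have "inj_on (nth xs) {..<length xs}"
    using assms by (simp add: inj_on_nth)
  then have "(f \<circ> the_inv_into {..<length xs} (nth xs)) (xs ! j) = f j" if "j < length xs" for j
    using that by (simp add: the_inv_into_f_f)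
  then show ?thesis by blast
qed

lemma pre_iff_param_asg:
  assumes "configuration C D Ob Sp z a"
  shows "pre Ob Sp z a \<alpha> \<beta> \<longleftrightarrow> (\<exists>r. sat_pbf (param_asg (\<alpha> \<circ> nth z) (\<beta> \<circ> nth z) r) (Sp \<union> Ob))"
    (is "_ \<longleftrightarrow> (\<exists>r. sat_pbf (?\<nu> r) _)")
proof -
  from assms have params: "params_ok (length z) (length a) Sp" "params_ok (length z) (length a) Ob"
    and "distinct a"
    unfolding configuration_def Let_def by auto
  have pre_iff: "pre Ob Sp z a \<alpha> \<beta> \<longleftrightarrow> (\<exists>\<rho>. sat_pbf (?\<nu> (\<rho> \<circ> nth a)) (Sp \<union> Ob))"
    unfolding pre_def by (simp add: sat_app_list_assign[OF params(1)] sat_app_list_assign[OF params(2)])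
  show ?thesis
  proof
    assume "\<exists>r. sat_pbf (?\<nu> r) (Sp \<union> Ob)"
    then obtain r where r: "sat_pbf (?\<nu> r) (Sp \<union> Ob)" ..
    obtain \<rho> where \<rho>: "\<forall>j<length a. \<rho> (a ! j) = r j"
      using distinct_nth_interpolate[OF \<open>distinct a\<close>] by blast
    have "sat_pbf (?\<nu> (\<rho> \<circ> nth a)) P \<longleftrightarrow> sat_pbf (?\<nu> r) P"
      if "params_ok (length z) (length a) P" for P
      using that \<rho> by (intro sat_param_asg_cong) auto
    with r params show "pre Ob Sp z a \<alpha> \<beta>"
      unfolding pre_iff by auto
  qed (auto simp: pre_iff)
qed

lemma pre_trans:
  assumes config: "configuration C D Ob Sp z a"
    and "pre Ob Sp z a \<alpha> \<beta>" and "pre Ob Sp z a \<beta> \<gamma>"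
  shows "pre Ob Sp z a \<alpha> \<gamma>"
proof -
  let ?n = "length z" and ?m = "length a"
  let ?x = "fresh IX ?n" and ?y = "fresh IY ?n" and ?z = "fresh IZ ?n"
  from config have params: "params_ok ?n ?m Sp" "params_ok ?n ?m Ob"
    and spec: "is_specification ?m Sp"
    and trans: "app Sp ?x ?y (fresh IA ?m) \<union> app Ob ?x ?y (fresh IA ?m) \<union>
      app Sp ?y ?z (fresh IB ?m) \<union> app Ob ?y ?z (fresh IB ?m) \<union> app Sp ?x ?z (fresh IC ?m)
      \<turnstile>\<^sub>c\<^sub>p app Ob ?x ?z (fresh IC ?m)"
    unfolding configuration_def Let_def by auto
  obtain r1 where r1: "sat_pbf (param_asg (\<alpha> \<circ> nth z) (\<beta> \<circ> nth z) r1) (Sp \<union> Ob)"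
    using assms(2) pre_iff_param_asg[OF config] by blast
  obtain r2 where r2: "sat_pbf (param_asg (\<beta> \<circ> nth z) (\<gamma> \<circ> nth z) r2) (Sp \<union> Ob)"
    using assms(3) pre_iff_param_asg[OF config] by blast
  obtain r3 where r3: "sat_pbf (param_asg (\<alpha> \<circ> nth z) (\<gamma> \<circ> nth z) r3) Sp"
    using specification_satisfiable[OF spec] by blast
  define \<delta> where "\<delta> = (\<lambda>v. case v of IX i \<Rightarrow> \<alpha> (z ! i) | IY i \<Rightarrow> \<beta> (z ! i) | IZ i \<Rightarrow> \<gamma> (z ! i)
    | IA j \<Rightarrow> r1 j | IB j \<Rightarrow> r2 j | IC j \<Rightarrow> r3 j)"
  have \<delta>: "\<delta> \<circ> IX = \<alpha> \<circ> nth z" "\<delta> \<circ> IY = \<beta> \<circ> nth z" "\<delta> \<circ> IZ = \<gamma> \<circ> nth z"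
    "\<delta> \<circ> IA = r1" "\<delta> \<circ> IB = r2" "\<delta> \<circ> IC = r3"
    by (auto simp: \<delta>_def)
  have "sat_pbf \<delta> (app Sp ?x ?y (fresh IA ?m) \<union> app Ob ?x ?y (fresh IA ?m) \<union>
      app Sp ?y ?z (fresh IB ?m) \<union> app Ob ?y ?z (fresh IB ?m) \<union> app Sp ?x ?z (fresh IC ?m))"
    using r1 r2 r3 by (simp add: sat_app_fresh[OF params(1)] sat_app_fresh[OF params(2)] \<delta>)
  then have "sat_pbf \<delta> (app Ob ?x ?z (fresh IC ?m))"
    by (rule derives_sound[OF trans])
  with r3 have "sat_pbf (param_asg (\<alpha> \<circ> nth z) (\<gamma> \<circ> nth z) r3) (Sp \<union> Ob)"
    by (simp add: sat_app_fresh[OF params(2)] \<delta>)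
  then show ?thesis
    using pre_iff_param_asg[OF config] by blast
qed

subsection \<open>The redundance rule\<close>

lemma redundance_witness:
  assumes config: "configuration C D Ob Sp z a"
    and Cn_vars: "vars_pbc Cn \<inter> set a = {}"
    and \<omega>_avoids_a: "\<forall>x. \<forall>y\<in>set a. \<omega> x \<noteq> LitV (Pos y) \<and> \<omega> x \<noteq> LitV (Neg y)"
    and derivation: "C \<union> D \<union> {neg_pbc Cn} \<union> app Sp (list_subst z \<omega>) (list_vars z) (list_vars a)
           \<turnstile>\<^sub>c\<^sub>p subst_pbf \<omega> (C \<union> D \<union> {Cn}) \<union> app Ob (list_subst z \<omega>) (list_vars z) (list_vars a)"
    and sat_CD: "sat_pbf \<alpha> (C \<union> D)" and unsat_Cn: "\<not> sat_pbc \<alpha> Cn"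
  shows "sat_pbf (sval_holds \<alpha> \<circ> \<omega>) (C \<union> D \<union> {Cn}) \<and> pre Ob Sp z a (sval_holds \<alpha> \<circ> \<omega>) \<alpha>"
proof -
  from config have params: "params_ok (length z) (length a) Sp" "params_ok (length z) (length a) Ob"
    and "distinct a" and spec: "is_specification (length a) Sp" and "set z \<inter> set a = {}"
    and "vars_pbf (C \<union> D) \<inter> set a = {}"
    unfolding configuration_def Let_def vars_pbf_def by auto
  let ?u = "sval_holds \<alpha> \<circ> \<omega> \<circ> nth z" and ?v = "\<alpha> \<circ> nth z"
  obtain r where r: "sat_pbf (param_asg ?u ?v r) Sp"
    using specification_satisfiable[OF spec] by blast
  obtain \<rho> where \<rho>: "\<forall>j<length a. \<rho> (a ! j) = r j"
    using distinct_nth_interpolate[OF \<open>distinct a\<close>] by blast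
  define \<gamma> where "\<gamma> x = (if x \<in> set a then \<rho> x else \<alpha> x)" for x
  have "z ! i \<notin> set a" if "i < length z" for i
    using nth_mem[OF that] \<open>set z \<inter> set a = {}\<close> by blast
  then have \<gamma>_z: "\<forall>i<length z. \<gamma> (z ! i) = \<alpha> (z ! i)"
    by (simp add: \<gamma>_def)
  have \<gamma>_\<omega>: "sval_holds \<gamma> \<circ> \<omega> = sval_holds \<alpha> \<circ> \<omega>"
  proof
    fix x show "(sval_holds \<gamma> \<circ> \<omega>) x = (sval_holds \<alpha> \<circ> \<omega>) x"
      using \<omega>_avoids_a by (cases "(\<gamma>, \<omega> x)" rule: sval_holds.cases) (auto simp: \<gamma>_def)
  qed
  have \<gamma>_a: "\<forall>j<length a. \<gamma> (a ! j) = r j"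
    using \<rho> by (simp add: \<gamma>_def)
  have "sat_pbf \<gamma> (C \<union> D) \<longleftrightarrow> sat_pbf \<alpha> (C \<union> D)"
    by (rule sat_pbf_cong) (use \<open>vars_pbf (C \<union> D) \<inter> set a = {}\<close> in \<open>auto simp: \<gamma>_def\<close>)
  moreover have "sat_pbc \<gamma> Cn \<longleftrightarrow> sat_pbc \<alpha> Cn"
    by (rule sat_pbc_cong) (use Cn_vars in \<open>auto simp: \<gamma>_def\<close>)
  moreover have app_\<gamma>: "sat_pbf \<gamma> (app P (list_subst z \<omega>) (list_vars z) (list_vars a)) \<longleftrightarrow>
      sat_pbf (param_asg ?u ?v r) P" if "params_ok (length z) (length a) P" for P
    unfolding sat_app_list_subst[OF that] \<gamma>_\<omega>
    by (rule sat_param_asg_cong[OF that]) (simp_all add: \<gamma>_z \<gamma>_a)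
  ultimately have "sat_pbf \<gamma> (subst_pbf \<omega> (C \<union> D \<union> {Cn}) \<union>
      app Ob (list_subst z \<omega>) (list_vars z) (list_vars a))"
    using sat_CD unsat_Cn r params by (intro derives_sound[OF derivation]) (simp add: sat_neg_pbc)
  then have "sat_pbf (sval_holds \<alpha> \<circ> \<omega>) (C \<union> D \<union> {Cn})"
    and "sat_pbf (param_asg ?u ?v r) (Sp \<union> Ob)"
    using r params app_\<gamma>
    by (simp_all only: sat_pbf_Un sat_subst_pbf \<gamma>_\<omega>)
  then show ?thesis
    using pre_iff_param_asg[OF config] by (auto simp: comp_assoc)
qed

theorem lemma5:
  fixes F C D :: "'v pbf" and Ob Sp :: "fvar pbf" and z a :: "'v list"
    and Cn :: "'v pbc" and \<omega> :: "'v \<Rightarrow> 'v sval"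
  assumes "configuration C D Ob Sp z a"
    and "weakly_valid F C D Ob Sp z a"
    and "vars_pbc Cn \<inter> set a = {}"
    and "\<forall>x. \<forall>y\<in>set a. \<omega> x \<noteq> LitV (Pos y) \<and> \<omega> x \<noteq> LitV (Neg y)"
    and "C \<union> D \<union> {neg_pbc Cn} \<union> app Sp (list_subst z \<omega>) (list_vars z) (list_vars a)
           \<turnstile>\<^sub>c\<^sub>p subst_pbf \<omega> (C \<union> D \<union> {Cn}) \<union> app Ob (list_subst z \<omega>) (list_vars z) (list_vars a)"
  shows "weakly_valid F C (D \<union> {Cn}) Ob Sp z a"
  unfolding weakly_valid_def
proof (intro conjI allI impI)
  show "satisfiable C" if "satisfiable F"
    using assms(2) that by (simp add: weakly_valid_def)
next
  fix \<alpha> assume "sat_pbf \<alpha> C"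
  then obtain \<alpha>' where \<alpha>': "sat_pbf \<alpha>' (C \<union> D)" "pre Ob Sp z a \<alpha>' \<alpha>"
    using assms(2) unfolding weakly_valid_def by blast
  show "\<exists>\<beta>. sat_pbf \<beta> (C \<union> (D \<union> {Cn})) \<and> pre Ob Sp z a \<beta> \<alpha>"
  proof (cases "sat_pbc \<alpha>' Cn")
    case True
    with \<alpha>' show ?thesis by auto
  next
    case False
    with \<alpha>' assms have "sat_pbf (sval_holds \<alpha>' \<circ> \<omega>) (C \<union> D \<union> {Cn})"
      and "pre Ob Sp z a (sval_holds \<alpha>' \<circ> \<omega>) \<alpha>'"
      using redundance_witness by blast+
    with pre_trans[OF assms(1)] \<alpha>'(2) show ?thesis
      by (metis Un_assoc)
  qed
qed

end
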